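(* Let $d\ge 1$, $n\in\mathbb{N}$, and let $S$ be simple symmetric random walk on $\mathbb{Z}^d$ started at $0$, with range $R(n)=\{S(0),\ldots,S(n)\}$. For every finite $A\subset\mathbb{Z}^d$, $$p_n(A):=\Pr[R(n)=A]\le\Big(1-\frac{1}{2d}\Big)^{|\partial A|-1}.$$
   Context: Two vertices $z,w\in\mathbb{Z}^d$ are adjacent, $z\sim w$, if their graph distance in $\mathbb{Z}^d$ is $1$; $z\sim B$ means the graph distance from $z$ to the set $B$ is $1$. The inner boundary of $A\subset\mathbb{Z}^d$ is $\partial A=\{z\in A : z\sim \mathbb{Z}^d\setminus A\}$. *)

theory Defs
  imports "HOL-Analysis.Analysis" "HOL-Probability.Probability"
begin

text \<open>The lattice Z^d is modelled as int ^ 'd for a finite index type 'd, d = CARD('d) \<ge> 1.\<close>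

definition lat_adj :: "int ^ 'd \<Rightarrow> int ^ 'd \<Rightarrow> bool" where
  "lat_adj z w \<longleftrightarrow> (\<Sum>i\<in>UNIV. \<bar>z $ i - w $ i\<bar>) = 1"

definition inner_boundary :: "(int ^ 'd) set \<Rightarrow> (int ^ 'd) set" where
  "inner_boundary A = {z \<in> A. \<exists>w. w \<notin> A \<and> lat_adj z w}"

definition unit_steps :: "(int ^ 'd) set" where
  "unit_steps = {v. \<exists>i. v = axis i 1 \<or> v = axis i (-1)}"

text \<open>Uniform distribution on step sequences of length n: the first n steps of SRW.\<close>
definition srw_steps :: "nat \<Rightarrow> (int ^ 'd) list pmf" where
  "srw_steps n = pmf_of_set {xs. length xs = n \<and> set xs \<subseteq> unit_steps}"

definition walk_pos :: "(int ^ 'd) list \<Rightarrow> nat \<Rightarrow> int ^ 'd" where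
  "walk_pos xs k = sum_list (take k xs)"

definition walk_range :: "(int ^ 'd) list \<Rightarrow> (int ^ 'd) set" where
  "walk_range xs = {walk_pos xs k | k. k \<le> length xs}"

definition range_prob :: "nat \<Rightarrow> (int ^ 'd) set \<Rightarrow> real" where
  "range_prob n A = measure_pmf.prob (srw_steps n) {xs. walk_range xs = A}"

end

theory Submission
  imports Defs
begin

(* Let m = 2d be the number of unit steps and r = m/(m-1).  Give every step sequence
   a weight: along the walk, each step taken from a point of the inner boundary of A
   that is visited for the first time is multiplied by r, unless it is a fixed "exit
   step" leading out of A, in which case the weight becomes 0; all other steps have
   factor 1.  At every time the factors average to at most 1 over the m possible
   steps, so the total weight of all m^n sequences is at most m^n.  A walk with range
   exactly A never takes an exit step, and it visits every point of the inner
   boundary, all but possibly the last one at a time < n; so its weight is at least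
   r^(|dA|-1).  Hence #{walks with range A} * r^(|dA|-1) <= m^n, which is the claim. *)

definition step_factor :: "real \<Rightarrow> ('a list \<Rightarrow> bool) \<Rightarrow> ('a list \<Rightarrow> 'a) \<Rightarrow> 'a list \<Rightarrow> 'a \<Rightarrow> real" where
  "step_factor r c f p x = (if c p then (if x = f p then 0 else r) else 1)"

definition path_weight :: "real \<Rightarrow> ('a list \<Rightarrow> bool) \<Rightarrow> ('a list \<Rightarrow> 'a) \<Rightarrow> 'a list \<Rightarrow> real" where
  "path_weight r c f xs = (\<Prod>t<length xs. step_factor r c f (take t xs) (xs ! t))"

lemma path_weight_Cons:
  "path_weight r c f (x # xs) =
     step_factor r c f [] x * path_weight r (\<lambda>p. c (x # p)) (\<lambda>p. f (x # p)) xs"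
  unfolding path_weight_def
  by (simp only: length_Cons prod.lessThan_Suc_shift) (simp add: step_factor_def)

lemma path_weight_nonneg: "r \<ge> 0 \<Longrightarrow> path_weight r c f xs \<ge> 0"
  unfolding path_weight_def step_factor_def by (rule prod_nonneg) auto

lemma step_factor_sum_le:
  assumes "finite S" "r \<ge> 0" "(real (card S) - 1) * r \<le> real (card S)"
    and "c p \<Longrightarrow> f p \<in> S"
  shows "(\<Sum>x\<in>S. step_factor r c f p x) \<le> real (card S)"
proof (cases "c p")
  case True
  then have fS: "f p \<in> S" using assms(4) by blast
  have "(\<Sum>x\<in>S. step_factor r c f p x) = step_factor r c f p (f p) + (\<Sum>x\<in>S - {f p}. step_factor r c f p x)"
    using assms(1) fS by (rule sum.remove)
  also have "\<dots> = real (card (S - {f p})) * r"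
    using True by (simp add: step_factor_def)
  also have "\<dots> = (real (card S) - 1) * r"
  proof -
    have "card S > 0" using assms(1) fS card_gt_0_iff by blast
    then show ?thesis using assms(1) fS by (simp add: card_Diff_singleton of_nat_diff)
  qed
  finally show ?thesis using assms(3) by linarith
qed (simp add: step_factor_def)

lemma sum_lists_length_Suc:
  fixes g :: "'a list \<Rightarrow> 'b::comm_monoid_add"
  shows "(\<Sum>xs\<in>{xs. set xs \<subseteq> S \<and> length xs = Suc n}. g xs) =
         (\<Sum>x\<in>S. \<Sum>ys\<in>{ys. set ys \<subseteq> S \<and> length ys = n}. g (x # ys))"
proof -
  have "(\<Sum>xs\<in>{xs. set xs \<subseteq> S \<and> length xs = Suc n}. g xs) =
        (\<Sum>(ys, x)\<in>{ys. set ys \<subseteq> S \<and> length ys = n} \<times> S. g (x # ys))"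
    unfolding lists_length_Suc_eq by (subst sum.reindex) (auto simp: inj_on_def case_prod_unfold)
  also have "\<dots> = (\<Sum>ys\<in>{ys. set ys \<subseteq> S \<and> length ys = n}. \<Sum>x\<in>S. g (x # ys))"
    by (rule sum.cartesian_product[symmetric])
  also have "\<dots> = (\<Sum>x\<in>S. \<Sum>ys\<in>{ys. set ys \<subseteq> S \<and> length ys = n}. g (x # ys))"
    by (rule sum.swap)
  finally show ?thesis .
qed

lemma path_weight_sum_le:
  assumes "finite S" "r \<ge> 0" "(real (card S) - 1) * r \<le> real (card S)"
    and "\<And>p. c p \<Longrightarrow> f p \<in> S"
  shows "(\<Sum>xs\<in>{xs. set xs \<subseteq> S \<and> length xs = n}. path_weight r c f xs) \<le> real (card S) ^ n"
  using assms(4)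
proof (induction n arbitrary: c f)
  case 0
  have "{xs. set xs \<subseteq> S \<and> length xs = 0} = {[]}" by auto
  then show ?case by (simp add: path_weight_def)
next
  case (Suc n)
  let ?L = "{ys. set ys \<subseteq> S \<and> length ys = n}"
  have "(\<Sum>xs\<in>{xs. set xs \<subseteq> S \<and> length xs = Suc n}. path_weight r c f xs) =
        (\<Sum>x\<in>S. step_factor r c f [] x * (\<Sum>ys\<in>?L. path_weight r (\<lambda>p. c (x # p)) (\<lambda>p. f (x # p)) ys))"
    by (simp add: sum_lists_length_Suc path_weight_Cons sum_distrib_left)
  also have "\<dots> \<le> (\<Sum>x\<in>S. step_factor r c f [] x * real (card S) ^ n)"
    using Suc assms(2) by (intro sum_mono mult_left_mono) (auto simp: step_factor_def)
  also have "\<dots> = (\<Sum>x\<in>S. step_factor r c f [] x) * real (card S) ^ n"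
    by (simp add: sum_distrib_right)
  also have "\<dots> \<le> real (card S) * real (card S) ^ n"
    using step_factor_sum_le[OF assms(1-3), of c "[]" f] Suc.prems by (intro mult_right_mono) auto
  finally show ?case by simp
qed

lemma lat_adj_diff_unit_step:
  fixes z w :: "int ^ 'd"
  assumes "lat_adj z w"
  shows "w - z \<in> unit_steps"
proof -
  have s: "(\<Sum>j\<in>UNIV. \<bar>z $ j - w $ j\<bar>) = 1" using assms by (simp add: lat_adj_def)
  obtain i where i: "z $ i \<noteq> w $ i"
    using s by (metis (no_types, lifting) abs_zero diff_self sum.neutral zero_neq_one)
  have split: "(\<Sum>j\<in>UNIV. \<bar>z $ j - w $ j\<bar>) = \<bar>z $ i - w $ i\<bar> + (\<Sum>j\<in>UNIV - {i}. \<bar>z $ j - w $ j\<bar>)"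
    by (rule sum.remove) auto
  have "(\<Sum>j\<in>UNIV - {i}. \<bar>z $ j - w $ j\<bar>) \<ge> 0" by (rule sum_nonneg) auto
  with s split i have one: "\<bar>z $ i - w $ i\<bar> = 1" and rest: "(\<Sum>j\<in>UNIV - {i}. \<bar>z $ j - w $ j\<bar>) = 0"
    by linarith+
  have "z $ j = w $ j" if "j \<noteq> i" for j
    using rest that by (subst (asm) sum_nonneg_eq_0_iff) auto
  then have "w - z = axis i (w $ i - z $ i)"
    by (simp add: vec_eq_iff axis_def)
  moreover have "w $ i - z $ i = 1 \<or> w $ i - z $ i = -1" using one by linarith
  ultimately show ?thesis unfolding unit_steps_def by auto
qed

lemma unit_steps_finite_card:
  "finite (unit_steps :: (int ^ 'd) set) \<and> card (unit_steps :: (int ^ 'd) set) = 2 * CARD('d)"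
proof -
  have eq: "(unit_steps :: (int ^ 'd) set) = range (\<lambda>i. axis i 1) \<union> range (\<lambda>i. axis i (-1))"
    unfolding unit_steps_def by auto
  have "inj (\<lambda>i::'d. axis i (1::int))" "inj (\<lambda>i::'d. axis i (-1::int))"
    by (auto simp: inj_on_def axis_eq_axis)
  moreover have "range (\<lambda>i::'d. axis i (1::int)) \<inter> range (\<lambda>i. axis i (-1)) = {}"
    by (auto simp: axis_eq_axis)
  ultimately show ?thesis unfolding eq by (simp add: card_Un_disjoint card_image)
qed

definition first_boundary_visit :: "(int ^ 'd) set \<Rightarrow> (int ^ 'd) list \<Rightarrow> bool" where
  "first_boundary_visit A p \<longleftrightarrow>
     sum_list p \<in> inner_boundary A \<and> (\<forall>k<length p. sum_list (take k p) \<noteq> sum_list p)"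

definition exit_step :: "(int ^ 'd) set \<Rightarrow> (int ^ 'd) list \<Rightarrow> int ^ 'd" where
  "exit_step A p = (SOME v. v \<in> unit_steps \<and> sum_list p + v \<notin> A)"

lemma exit_step_leaves:
  assumes "sum_list p \<in> inner_boundary A"
  shows "exit_step A p \<in> unit_steps \<and> sum_list p + exit_step A p \<notin> A"
proof -
  from assms obtain w where w: "w \<notin> A" "lat_adj (sum_list p) w"
    unfolding inner_boundary_def by blast
  then have "\<exists>v. v \<in> unit_steps \<and> sum_list p + v \<notin> A"
    using lat_adj_diff_unit_step by (metis add.commute diff_add_cancel)
  then show ?thesis unfolding exit_step_def by (rule someI_ex)
qed

lemma walk_avoids_exit_step:
  assumes "walk_range xs = A" "t < length xs" "sum_list (take t xs) \<in> inner_boundary A"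
  shows "xs ! t \<noteq> exit_step A (take t xs)"
proof -
  have "sum_list (take (Suc t) xs) \<in> A"
    using assms(1,2) unfolding walk_range_def walk_pos_def by force
  moreover have "sum_list (take (Suc t) xs) = sum_list (take t xs) + xs ! t"
    using assms(2) by (simp add: take_Suc_conv_app_nth)
  ultimately show ?thesis using exit_step_leaves[OF assms(3)] by auto
qed

text \<open>Each boundary point of the range is first visited at some time k \<le> n; all of these
  times except possibly n are first-visit times before the end of the walk.\<close>
lemma card_boundary_first_visits:
  assumes "walk_range xs = A"
  shows "card (inner_boundary A) - 1 \<le> card {t. t < length xs \<and> first_boundary_visit A (take t xs)}"
proof -
  define n where "n = length xs"
  define T where "T = {t. t < n \<and> first_boundary_visit A (take t xs)}"
  have "inner_boundary A \<subseteq> (\<lambda>t. sum_list (take t xs)) ` insert n T"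
  proof
    fix z assume zb: "z \<in> inner_boundary A"
    then have "z \<in> walk_range xs" using assms unfolding inner_boundary_def by auto
    then obtain k where k: "k \<le> n" "sum_list (take k xs) = z"
      unfolding walk_range_def walk_pos_def n_def by auto
    define k0 where "k0 = (LEAST k. sum_list (take k xs) = z)"
    have k0: "sum_list (take k0 xs) = z" "k0 \<le> k"
      unfolding k0_def using k(2) by (auto intro: LeastI Least_le)
    have "sum_list (take j xs) \<noteq> z" if "j < k0" for j
      using not_less_Least[OF that[unfolded k0_def]] by blast
    then have "first_boundary_visit A (take k0 xs)"
      unfolding first_boundary_visit_def using k0 k zb by (auto simp: n_def min_def)
    then have "k0 \<in> insert n T" using k0 k unfolding T_def by auto
    then show "z \<in> (\<lambda>t. sum_list (take t xs)) ` insert n T" using k0 by blast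
  qed
  moreover have "finite T" unfolding T_def by auto
  ultimately have "card (inner_boundary A) \<le> card (insert n T)"
    by (meson card_image_le card_mono finite.insertI finite_imageI order_trans)
  also have "\<dots> \<le> Suc (card T)" by (simp add: card_insert_if \<open>finite T\<close>)
  finally show ?thesis unfolding T_def n_def by simp
qed

lemma walk_weight_ge:
  assumes "walk_range xs = A" "r \<ge> 1"
  shows "r ^ (card (inner_boundary A) - 1) \<le> path_weight r (first_boundary_visit A) (exit_step A) xs"
proof -
  define T where "T = {t. t < length xs \<and> first_boundary_visit A (take t xs)}"
  have "step_factor r (first_boundary_visit A) (exit_step A) (take t xs) (xs ! t) = (if t \<in> T then r else 1)"
    if "t < length xs" for t
  proof -
    have "t \<in> T \<longleftrightarrow> first_boundary_visit A (take t xs)" using that by (simp add: T_def)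
    then show ?thesis
      using walk_avoids_exit_step[OF assms(1) that]
      by (auto simp: step_factor_def first_boundary_visit_def)
  qed
  then have "path_weight r (first_boundary_visit A) (exit_step A) xs = (\<Prod>t<length xs. if t \<in> T then r else 1)"
    unfolding path_weight_def by (intro prod.cong) auto
  also have "\<dots> = r ^ card T"
    by (simp add: prod.If_cases T_def Int_def conj_commute)
  finally show ?thesis
    using card_boundary_first_visits[OF assms(1)] assms(2) by (simp add: T_def power_increasing)
qed

lemma range_prob_eq_card:
  "range_prob n (A :: (int ^ 'd) set) =
     real (card {xs. set xs \<subseteq> unit_steps \<and> length xs = n \<and> walk_range xs = A}) / real (2 * CARD('d)) ^ n"
proof -
  let ?L = "{xs :: (int ^ 'd) list. set xs \<subseteq> unit_steps \<and> length xs = n}"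
  have fin: "finite ?L" and card: "card ?L = (2 * CARD('d)) ^ n"
    using unit_steps_finite_card[where 'd='d]
    by (auto intro: finite_lists_length_eq simp: card_lists_length_eq power_mult_distrib)
  have "replicate n (axis undefined 1) \<in> ?L" by (auto simp: unit_steps_def)
  then have "?L \<noteq> {}" by blast
  moreover have "srw_steps n = pmf_of_set ?L" unfolding srw_steps_def by (simp add: conj_commute)
  ultimately show ?thesis
    unfolding range_prob_def using fin card
    by (simp add: measure_pmf_of_set Int_def conj_ac)
qed

text \<open>The bound with the exponent as a natural number (truncated at 0).\<close>
lemma range_prob_le:
  "range_prob n (A :: (int ^ 'd) set) \<le> (1 - 1 / (2 * real CARD('d))) ^ (card (inner_boundary A) - 1)"
proof -
  define m where "m = real (2 * CARD('d))"
  define r where "r = m / (m - 1)"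
  define K where "K = card (inner_boundary A) - 1"
  define B where "B = {xs. set xs \<subseteq> unit_steps \<and> length xs = n \<and> walk_range xs = A}"
  let ?L = "{xs :: (int ^ 'd) list. set xs \<subseteq> unit_steps \<and> length xs = n}"
  let ?w = "path_weight r (first_boundary_visit A) (exit_step A)"
  have m: "m \<ge> 2" unfolding m_def by simp
  have r: "r \<ge> 1" "(m - 1) * r \<le> m" unfolding r_def using m by (simp_all add: field_simps)
  have "real (card B) * r ^ K = (\<Sum>xs\<in>B. r ^ K)" by simp
  also have "\<dots> \<le> (\<Sum>xs\<in>B. ?w xs)"
    unfolding B_def K_def using r by (intro sum_mono walk_weight_ge) auto
  also have "\<dots> \<le> (\<Sum>xs\<in>?L. ?w xs)"
    using unit_steps_finite_card r
    by (intro sum_mono2 path_weight_nonneg finite_lists_length_eq) (auto simp: B_def)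
  also have "\<dots> \<le> m ^ n"
    using path_weight_sum_le[of unit_steps r "first_boundary_visit A" "exit_step A" n]
      unit_steps_finite_card[where 'd='d] r exit_step_leaves
    by (auto simp: m_def first_boundary_visit_def simp del: of_nat_mult)
  finally have "real (card B) * r ^ K \<le> m ^ n" .
  then have "real (card B) / m ^ n \<le> (1 / r) ^ K"
    using m r by (simp add: field_simps power_one_over)
  moreover have "1 / r = 1 - 1 / m"
    unfolding r_def using m by (simp add: field_simps)
  ultimately show ?thesis
    by (simp add: range_prob_eq_card B_def K_def m_def)
qed

text \<open>The theorem: the integer exponent |dA| - 1 agrees with the truncated one unless the
  boundary is empty, where q^(-1) \<ge> 1 only weakens the bound.\<close>
theorem mainTheorem2:
  fixes A :: "(int ^ 'd) set" and n :: nat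
  assumes "finite A"
  shows "range_prob n A \<le> (1 - 1 / (2 * real CARD('d))) powi (int (card (inner_boundary A)) - 1)"
proof -
  define q where "q = 1 - 1 / (2 * real CARD('d))"
  have "real CARD('d) \<ge> 1" by (simp add: Suc_le_eq)
  then have "2 * real CARD('d) > 1" by linarith
  then have q: "0 < q" "q \<le> 1" unfolding q_def by (simp_all add: field_simps)
  have "q ^ (card (inner_boundary A) - 1) = q powi int (card (inner_boundary A) - 1)"
    by simp
  also have "\<dots> \<le> q powi (int (card (inner_boundary A)) - 1)"
    using q by (intro power_int_decreasing) auto
  finally show ?thesis using range_prob_le[of n A] q_def by simp
qed

end
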